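(* Consider the random intersection graph $G(n,m,F)$ defined in the context, with $m=\lfloor\beta n^\alpha\rfloor$ and $p_i=\gamma W_i n^{-(1+\alpha)/2}\wedge 1$, and assume $F$ has finite mean. Let $i,j,k$ be three distinct vertices and let $\bar c^{(n)}_{i,j,k}=\bar{\mathbf P}_n(E_{ij}\mid E_{ik}\cap E_{jk})$. Then as $n\to\infty$: (a) if $\alpha<1$, $\bar c^{(n)}_{i,j,k}\to 1$ in probability; (b) if $\alpha=1$, $\bar c^{(n)}_{i,j,k}\to (1+\beta\gamma W_k)^{-1}$ in probability; (c) if $\alpha>1$, $\bar c^{(n)}_{i,j,k}\to 0$ in probability.
   Context: Model $G(n,m,F)$: fix constants $\alpha,\beta,\gamma>0$ and a probability distribution $F$ on $(0,\infty)$; if $F$ has finite mean it is assumed to have mean $1$. For a positive integer $n$ let $m=\lfloor\beta n^\alpha\rfloor$, let $\mathcal V=\{1,\dots,n\}$ (vertices, "individuals") and $\mathcal A$ a set of $m$ elements ("groups"). Let $W_1,\dots,W_n$ be i.i.d. with distribution $F$ and set $p_i=\gamma W_i n^{-(1+\alpha)/2}\wedge 1$. Conditionally on the weights, form a bipartite graph $B(n,m,F)$ on $\mathcal V\cup\mathcal A$ by including each edge between $i\in\mathcal V$ and $a\in\mathcal A$ independently with probability $p_i$. The graph $G(n,m,F)$ on $\mathcal V$ has an edge between distinct $i,j$ iff some $a\in\mathcal A$ is adjacent to both $i$ and $j$ in $B(n,m,F)$. The parameters $\alpha,\beta,\gamma,F$ do not depend on $n$. $\bar{\mathbf P}_n$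 denotes the law of $B(n,m,F)$ conditional on the weights $W_1,\dots,W_n$, and $E_{ij}$ is the event that $i$ and $j$ belong to a common group (equivalently, $\{i,j\}$ is an edge of $G(n,m,F)$). Thus $\bar c^{(n)}_{i,j,k}$ is a random variable (a function of the weights). *)

theory Defs
  imports "HOL-Probability.Probability"
begin

definition num_groups :: "real \<Rightarrow> real \<Rightarrow> nat \<Rightarrow> nat" where
  "num_groups \<alpha> \<beta> n = nat \<lfloor>\<beta> * real n powr \<alpha>\<rfloor>"

definition edge_prob :: "real \<Rightarrow> real \<Rightarrow> nat \<Rightarrow> real \<Rightarrow> real" where
  "edge_prob \<alpha> \<gamma> n w = min (\<gamma> * w * real n powr (-(1 + \<alpha>) / 2)) 1"

text \<open>Law of the bipartite graph B(n,m,F) given the weights (through the edge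
  probabilities p): vertices {1..n}, groups {0..<m}; a bipartite graph is the
  indicator function of its edge set (pairs (vertex, group)).\<close>
definition bip_law :: "nat \<Rightarrow> nat \<Rightarrow> (nat \<Rightarrow> real) \<Rightarrow> (nat \<times> nat \<Rightarrow> bool) pmf" where
  "bip_law n m p = Pi_pmf ({1..n} \<times> {..<m}) False (\<lambda>(i, a). bernoulli_pmf (p i))"

definition common_group :: "nat \<Rightarrow> nat \<Rightarrow> nat \<Rightarrow> (nat \<times> nat \<Rightarrow> bool) set" where
  "common_group m i j = {B. \<exists>a<m. B (i, a) \<and> B (j, a)}"

definition cond_clust :: "nat \<Rightarrow> nat \<Rightarrow> (nat \<Rightarrow> real) \<Rightarrow> nat \<Rightarrow> nat \<Rightarrow> nat \<Rightarrow> real" where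
  "cond_clust n m p i j k =
     measure_pmf.prob (bip_law n m p)
        (common_group m i j \<inter> (common_group m i k \<inter> common_group m j k))
     / measure_pmf.prob (bip_law n m p) (common_group m i k \<inter> common_group m j k)"

definition conv_in_prob :: "'a measure \<Rightarrow> (nat \<Rightarrow> 'a \<Rightarrow> real) \<Rightarrow> ('a \<Rightarrow> real) \<Rightarrow> bool" where
  "conv_in_prob M X L \<longleftrightarrow>
     (\<forall>n. X n \<in> borel_measurable M) \<and> L \<in> borel_measurable M \<and>
     (\<forall>\<epsilon>>0. (\<lambda>n. measure M {\<omega> \<in> space M. \<bar>X n \<omega> - L \<omega>\<bar> > \<epsilon>}) \<longlonglongrightarrow> 0)"

end

theory Submission
  imports Defs
begin

text \<open>Fix the weights and write a, b, c for the edge probabilities of i, j, k and m for the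
  number of groups; a, b, c are of order n powr (-(1 + \<alpha>)/2) and m of order n powr \<alpha>.
  Counting groups, the probability that some group contains all of i, j, k is
  m a b c (1 + o(1)). The probability that the three vertices share groups pairwise but have
  no common group is o(m a b c), and the probability that i, k and j, k lie in two distinct
  groups but have no common group is m a b c \<cdot> m c (1 + o(1)). Hence the conditional
  probability is (1 + o(1)) / (1 + m c + o(1)), and m c \<approx> \<beta> \<gamma> W_k n powr ((\<alpha> - 1)/2)
  tends to 0, to \<beta> \<gamma> W_k or to infinity. This holds for every realisation of positive
  weights, so the convergence is almost sure and a fortiori in probability.\<close>

lemma measure_bip_law_cylinder:
  fixes St Sf :: "(nat \<times> nat) set"
  assumes fin: "finite St" "finite Sf" and disj: "St \<inter> Sf = {}"
    and sub: "St \<union> Sf \<subseteq> {1..n} \<times> {..<m}"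
    and prob: "\<And>x. x \<in> St \<union> Sf \<Longrightarrow> 0 \<le> p (fst x) \<and> p (fst x) \<le> 1"
  shows "measure_pmf.prob (bip_law n m p) {B. (\<forall>x\<in>St. B x) \<and> (\<forall>x\<in>Sf. \<not> B x)}
       = (\<Prod>x\<in>St. p (fst x)) * (\<Prod>x\<in>Sf. 1 - p (fst x))"
proof -
  let ?A = "{1..n} \<times> {..<m}"
  define Bs where "Bs x = (if x \<in> St then {True} else if x \<in> Sf then {False} else UNIV)" for x
  define f where "f x = (if x \<in> St then p (fst x) else if x \<in> Sf then 1 - p (fst x) else 1)" for x
  have eq: "{B. (\<forall>x\<in>St. B x) \<and> (\<forall>x\<in>Sf. \<not> B x)} = Pi ?A Bs"
  proof (intro set_eqI iffI)
    fix B assume "B \<in> {B. (\<forall>x\<in>St. B x) \<and> (\<forall>x\<in>Sf. \<not> B x)}"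
    then show "B \<in> Pi ?A Bs" by (auto simp: Bs_def Pi_def)
  next
    fix B assume B: "B \<in> Pi ?A Bs"
    have mem: "B x \<in> Bs x" if "x \<in> St \<union> Sf" for x
      using B sub that by (auto simp: Pi_def)
    show "B \<in> {B. (\<forall>x\<in>St. B x) \<and> (\<forall>x\<in>Sf. \<not> B x)}"
    proof (intro CollectI conjI ballI)
      show "B x" if "x \<in> St" for x using mem[of x] that by (simp add: Bs_def)
      show "\<not> B x" if "x \<in> Sf" for x using mem[of x] that disj by (auto simp: Bs_def split: if_splits)
    qed
  qed
  have "measure_pmf.prob (bip_law n m p) {B. (\<forall>x\<in>St. B x) \<and> (\<forall>x\<in>Sf. \<not> B x)}
      = (\<Prod>x\<in>?A. measure_pmf.prob ((\<lambda>(i, a). bernoulli_pmf (p i)) x) (Bs x))"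
    unfolding eq bip_law_def by (rule measure_Pi_pmf_Pi) simp
  also have "\<dots> = (\<Prod>x\<in>?A. f x)"
  proof (rule prod.cong[OF refl])
    fix x assume "x \<in> ?A"
    show "measure_pmf.prob ((\<lambda>(i, a). bernoulli_pmf (p i)) x) (Bs x) = f x"
      using prob[of x] disj by (cases x) (auto simp: Bs_def f_def measure_pmf_single)
  qed
  also have "\<dots> = (\<Prod>x\<in>St \<union> Sf. f x)"
    by (rule prod.mono_neutral_right) (use sub in \<open>auto simp: f_def\<close>)
  also have "\<dots> = (\<Prod>x\<in>St. f x) * (\<Prod>x\<in>Sf. f x)"
    by (rule prod.union_disjoint) (use fin disj in auto)
  also have "\<dots> = (\<Prod>x\<in>St. p (fst x)) * (\<Prod>x\<in>Sf. 1 - p (fst x))"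
    using disj by (auto simp: f_def intro!: arg_cong2[where f="(*)"] prod.cong)
  finally show ?thesis .
qed

lemma measure_pmf_Diff_UN_ge:
  assumes "finite I"
  shows "measure_pmf.prob Q X - (\<Sum>f\<in>I. measure_pmf.prob Q (X \<inter> Y f))
       \<le> measure_pmf.prob Q (X - (\<Union>f\<in>I. Y f))"
proof -
  have "X \<subseteq> (X - (\<Union>f\<in>I. Y f)) \<union> (\<Union>f\<in>I. X \<inter> Y f)" by auto
  then have "measure_pmf.prob Q X \<le> measure_pmf.prob Q ((X - (\<Union>f\<in>I. Y f)) \<union> (\<Union>f\<in>I. X \<inter> Y f))"
    by (rule measure_pmf.finite_measure_mono) auto
  also have "\<dots> \<le> measure_pmf.prob Q (X - (\<Union>f\<in>I. Y f)) + measure_pmf.prob Q (\<Union>f\<in>I. X \<inter> Y f)"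
    by (rule measure_Un_le) auto
  also have "\<dots> \<le> measure_pmf.prob Q (X - (\<Union>f\<in>I. Y f)) + (\<Sum>f\<in>I. measure_pmf.prob Q (X \<inter> Y f))"
    using measure_pmf.finite_measure_subadditive_finite[OF assms, of "\<lambda>f. X \<inter> Y f" Q] by simp
  finally show ?thesis by simp
qed

text \<open>Applied with t, r, s the probabilities that some group contains all three vertices, that
  the three share groups pairwise but none in common, and that i, k and j, k share groups but
  none is common to all three.\<close>
lemma ratio_sandwich:
  fixes x t r s \<rho> \<sigma>\<^sub>L \<sigma>\<^sub>U :: real
  assumes x: "0 < x" and t: "x * (1 - x) \<le> t" "0 \<le> t" "t \<le> x"
    and r: "0 \<le> r" "r \<le> x * \<rho>" and s: "x * \<sigma>\<^sub>L \<le> s" "s \<le> x * \<sigma>\<^sub>U"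
    and den: "0 < 1 - x + \<sigma>\<^sub>L"
  shows "(1 - x) / (1 + \<sigma>\<^sub>U) \<le> (t + r) / (t + s)"
    and "(t + r) / (t + s) \<le> (1 + \<rho>) / (1 - x + \<sigma>\<^sub>L)"
proof -
  have ts: "x * (1 - x + \<sigma>\<^sub>L) \<le> t + s" using t s by (simp add: algebra_simps)
  then have ts0: "0 < t + s" using mult_pos_pos[OF x den] by linarith
  have "\<sigma>\<^sub>L \<le> \<sigma>\<^sub>U" using order_trans[OF s] x by simp
  then have U: "0 < 1 + \<sigma>\<^sub>U" using den x by linarith
  have "0 \<le> x * \<rho>" using r by linarith
  then have \<rho>: "0 \<le> \<rho>" using x by (simp add: zero_le_mult_iff)
  show "(1 - x) / (1 + \<sigma>\<^sub>U) \<le> (t + r) / (t + s)"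
  proof (cases "x \<le> 1")
    case True
    have "(1 - x) * (t + s) \<le> (1 - x) * (x * (1 + \<sigma>\<^sub>U))"
      using True t s by (intro mult_left_mono) (auto simp: algebra_simps)
    also have "\<dots> \<le> (t + r) * (1 + \<sigma>\<^sub>U)"
      using mult_right_mono[of "x * (1 - x)" "t + r" "1 + \<sigma>\<^sub>U"] t r U by (simp add: algebra_simps)
    finally show ?thesis using ts0 U by (simp add: divide_simps)
  next
    case False
    then have "(1 - x) / (1 + \<sigma>\<^sub>U) \<le> 0" using U by (simp add: divide_nonpos_pos)
    also have "0 \<le> (t + r) / (t + s)" using t r ts0 by simp
    finally show ?thesis .
  qed
  have "(t + r) * (1 - x + \<sigma>\<^sub>L) \<le> x * (1 + \<rho>) * (1 - x + \<sigma>\<^sub>L)"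
    using t r den by (intro mult_right_mono) (auto simp: algebra_simps)
  also have "\<dots> \<le> (1 + \<rho>) * (t + s)"
    using mult_left_mono[OF ts, of "1 + \<rho>"] \<rho> by (simp add: algebra_simps)
  finally show "(t + r) / (t + s) \<le> (1 + \<rho>) / (1 - x + \<sigma>\<^sub>L)"
    using ts0 den by (simp add: divide_simps)
qed

section \<open>Edge configurations of three vertices\<close>

locale three_vertices =
  fixes n m :: nat and p :: "nat \<Rightarrow> real" and i j k :: nat
  assumes vertices: "i \<in> {1..n}" "j \<in> {1..n}" "k \<in> {1..n}" "i \<noteq> j" "i \<noteq> k" "j \<noteq> k"
    and probs: "0 \<le> p i" "p i \<le> 1" "0 \<le> p j" "p j \<le> 1" "0 \<le> p k" "p k \<le> 1"
begin

abbreviation "P \<equiv> measure_pmf.prob (bip_law n m p)"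
abbreviation "a \<equiv> p i"
abbreviation "b \<equiv> p j"
abbreviation "c \<equiv> p k"

definition "triple_at g = {B. B (i, g) \<and> B (j, g) \<and> B (k, g)}"
definition "some_triple = {B. \<exists>g<m. B (i, g) \<and> B (j, g) \<and> B (k, g)}"
definition "wedge_event = common_group m i k \<inter> common_group m j k"
definition "triangle_event = common_group m i j \<inter> (common_group m i k \<inter> common_group m j k)"
definition "wedge_at g h = {B. B (i, g) \<and> B (k, g) \<and> B (j, h) \<and> B (k, h)}"
definition "exact_wedge_at g h =
  {B. B (i, g) \<and> B (k, g) \<and> \<not> B (j, g) \<and> B (j, h) \<and> B (k, h) \<and> \<not> B (i, h)}"
text \<open>y = (f, u, v) stands for ``vertices u and v both lie in group f''.\<close>
definition "shares_group y = {B. B (fst (snd y), fst y) \<and> B (snd (snd y), fst y)}"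
definition "other_pairs g h = ({..<m} - {g, h}) \<times> {(i, j), (i, k), (j, k)}"
definition "clean_wedge_at g h = exact_wedge_at g h - (\<Union>y\<in>other_pairs g h. shares_group y)"
definition "triangle_at x = {B. B (i, fst x) \<and> B (j, fst x) \<and> B (i, fst (snd x)) \<and> B (k, fst (snd x))
   \<and> B (j, snd (snd x)) \<and> B (k, snd (snd x))}"
definition "distinct_pairs = {(g, h). g < m \<and> h < m \<and> g \<noteq> h}"
definition "distinct_triples = {x. fst x < m \<and> fst (snd x) < m \<and> snd (snd x) < m \<and>
   fst x \<noteq> fst (snd x) \<and> fst x \<noteq> snd (snd x) \<and> fst (snd x) \<noteq> snd (snd x)}"

lemma prob_cylinder:
  assumes "St \<subseteq> {i, j, k} \<times> {..<m}" "Sf \<subseteq> {i, j, k} \<times> {..<m}" "St \<inter> Sf = {}"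
  shows "P {B. (\<forall>x\<in>St. B x) \<and> (\<forall>x\<in>Sf. \<not> B x)} = (\<Prod>x\<in>St. p (fst x)) * (\<Prod>x\<in>Sf. 1 - p (fst x))"
proof (rule measure_bip_law_cylinder)
  show "finite St" by (rule finite_subset[OF assms(1)]) simp
  show "finite Sf" by (rule finite_subset[OF assms(2)]) simp
qed (use assms vertices probs in auto)

lemma prob_triple_at: "g < m \<Longrightarrow> P (triple_at g) = a * b * c"
proof -
  assume g: "g < m"
  have "triple_at g = {B. (\<forall>x\<in>{(i, g), (j, g), (k, g)}. B x) \<and> (\<forall>x\<in>{}. \<not> B x)}"
    by (auto simp: triple_at_def)
  also have "P \<dots> = a * b * c" by (subst prob_cylinder) (use g vertices in auto)
  finally show ?thesis .
qed

lemma prob_triple_at_Int: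
  "g < m \<Longrightarrow> f < m \<Longrightarrow> f \<noteq> g \<Longrightarrow> P (triple_at g \<inter> triple_at f) = (a * b * c)\<^sup>2"
proof -
  assume gf: "g < m" "f < m" "f \<noteq> g"
  have "triple_at g \<inter> triple_at f =
      {B. (\<forall>x\<in>{(i, g), (j, g), (k, g), (i, f), (j, f), (k, f)}. B x) \<and> (\<forall>x\<in>{}. \<not> B x)}"
    by (auto simp: triple_at_def)
  also have "P \<dots> = (a * b * c)\<^sup>2"
    by (subst prob_cylinder) (use gf vertices in \<open>auto simp: power2_eq_square\<close>)
  finally show ?thesis .
qed

lemma some_triple_eq: "some_triple = (\<Union>g<m. triple_at g)"
  by (auto simp: some_triple_def triple_at_def)

lemma prob_some_triple_le: "P some_triple \<le> m * (a * b * c)"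
proof -
  have "P some_triple \<le> (\<Sum>g<m. P (triple_at g))"
    unfolding some_triple_eq by (rule measure_pmf.finite_measure_subadditive_finite) auto
  also have "\<dots> = m * (a * b * c)" by (simp add: prob_triple_at)
  finally show ?thesis .
qed

text \<open>Second Bonferroni inequality, via the disjoint events ``group g is the only triple group''.\<close>
lemma prob_some_triple_ge: "m * (a * b * c) * (1 - m * (a * b * c)) \<le> P some_triple"
proof -
  define only where "only g = triple_at g - (\<Union>f\<in>{..<m} - {g}. triple_at f)" for g
  have disj: "disjoint_family_on only {..<m}"
    unfolding disjoint_family_on_def only_def by blast
  have sub: "(\<Union>g<m. only g) \<subseteq> some_triple" unfolding some_triple_eq only_def by blast
  have lb: "a * b * c - m * (a * b * c)\<^sup>2 \<le> P (only g)" if g: "g < m" for g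
  proof -
    have "(\<Sum>f\<in>{..<m} - {g}. P (triple_at g \<inter> triple_at f)) = (\<Sum>f\<in>{..<m} - {g}. (a * b * c)\<^sup>2)"
      by (intro sum.cong) (auto simp: prob_triple_at_Int g)
    also have "\<dots> \<le> m * (a * b * c)\<^sup>2"
      using card_Diff1_le[of "{..<m}" g] by (simp add: mult_right_mono)
    finally have "a * b * c - m * (a * b * c)\<^sup>2
        \<le> P (triple_at g) - (\<Sum>f\<in>{..<m} - {g}. P (triple_at g \<inter> triple_at f))"
      using prob_triple_at[OF g] by simp
    also have "\<dots> \<le> P (only g)" unfolding only_def by (rule measure_pmf_Diff_UN_ge) auto
    finally show ?thesis .
  qed
  have "m * (a * b * c) * (1 - m * (a * b * c)) = (\<Sum>g<m. a * b * c - m * (a * b * c)\<^sup>2)"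
    by (simp add: algebra_simps power2_eq_square)
  also have "\<dots> \<le> (\<Sum>g<m. P (only g))" by (intro sum_mono lb) auto
  also have "\<dots> = P (\<Union>g<m. only g)"
    by (rule measure_pmf.finite_measure_finite_Union[symmetric]) (use disj in auto)
  also have "\<dots> \<le> P some_triple" by (rule measure_pmf.finite_measure_mono[OF sub]) auto
  finally show ?thesis .
qed

lemma finite_distinct_pairs: "finite distinct_pairs"
  by (rule finite_subset[of _ "{..<m} \<times> {..<m}"]) (auto simp: distinct_pairs_def)

lemma card_distinct_pairs: "card distinct_pairs = m * (m - 1)"
proof -
  have "distinct_pairs = Sigma {..<m} (\<lambda>g. {..<m} - {g})" by (auto simp: distinct_pairs_def)
  then have "card distinct_pairs = (\<Sum>g<m. card ({..<m} - {g}))" by simp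
  also have "\<dots> = (\<Sum>g<m. m - 1)" by (intro sum.cong) auto
  finally show ?thesis by simp
qed

lemma prob_wedge_at: "(g, h) \<in> distinct_pairs \<Longrightarrow> P (wedge_at g h) = a * b * c\<^sup>2"
proof -
  assume gh: "(g, h) \<in> distinct_pairs"
  have "wedge_at g h = {B. (\<forall>x\<in>{(i, g), (k, g), (j, h), (k, h)}. B x) \<and> (\<forall>x\<in>{}. \<not> B x)}"
    by (auto simp: wedge_at_def)
  also have "P \<dots> = a * b * c\<^sup>2"
    by (subst prob_cylinder) (use gh vertices in \<open>auto simp: distinct_pairs_def power2_eq_square\<close>)
  finally show ?thesis .
qed

lemma prob_wedge_Diff_le: "P (wedge_event - some_triple) \<le> m\<^sup>2 * (a * b * c\<^sup>2)"
proof -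
  have "wedge_event - some_triple \<subseteq> (\<Union>x\<in>distinct_pairs. wedge_at (fst x) (snd x))"
  proof
    fix B assume "B \<in> wedge_event - some_triple"
    then obtain g h where g: "g < m" "B (i, g)" "B (k, g)" and h: "h < m" "B (j, h)" "B (k, h)"
      and "B \<notin> some_triple" by (auto simp: wedge_event_def common_group_def)
    then have "g \<noteq> h" by (auto simp: some_triple_def)
    then show "B \<in> (\<Union>x\<in>distinct_pairs. wedge_at (fst x) (snd x))" using g h
      by (auto simp: distinct_pairs_def wedge_at_def intro!: bexI[of _ "(g, h)"])
  qed
  then have "P (wedge_event - some_triple) \<le> P (\<Union>x\<in>distinct_pairs. wedge_at (fst x) (snd x))"
    by (rule measure_pmf.finite_measure_mono) auto
  also have "\<dots> \<le> (\<Sum>x\<in>distinct_pairs. P (wedge_at (fst x) (snd x)))"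
    by (rule measure_pmf.finite_measure_subadditive_finite) (auto simp: finite_distinct_pairs)
  also have "\<dots> = card distinct_pairs * (a * b * c\<^sup>2)" by (simp add: prob_wedge_at)
  also have "\<dots> \<le> m\<^sup>2 * (a * b * c\<^sup>2)"
  proof -
    have "card distinct_pairs \<le> m\<^sup>2" by (simp add: card_distinct_pairs power2_eq_square)
    then show ?thesis using probs by (intro mult_right_mono) simp_all
  qed
  finally show ?thesis .
qed

lemma prob_exact_wedge_at:
  "(g, h) \<in> distinct_pairs \<Longrightarrow> P (exact_wedge_at g h) = a * b * c\<^sup>2 * (1 - a) * (1 - b)"
proof -
  assume gh: "(g, h) \<in> distinct_pairs"
  have "exact_wedge_at g h =
      {B. (\<forall>x\<in>{(i, g), (k, g), (j, h), (k, h)}. B x) \<and> (\<forall>x\<in>{(j, g), (i, h)}. \<not> B x)}"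
    by (auto simp: exact_wedge_at_def)
  also have "P \<dots> = a * b * c\<^sup>2 * (1 - a) * (1 - b)"
    by (subst prob_cylinder) (use gh vertices in \<open>auto simp: distinct_pairs_def power2_eq_square\<close>)
  finally show ?thesis .
qed

lemma prob_exact_wedge_at_shares_group:
  assumes gh: "(g, h) \<in> distinct_pairs" and y: "y \<in> other_pairs g h"
  shows "P (exact_wedge_at g h \<inter> shares_group y)
       = a * b * c\<^sup>2 * (1 - a) * (1 - b) * (p (fst (snd y)) * p (snd (snd y)))"
proof -
  obtain f u w where y_eq: "y = (f, u, w)" by (cases y) auto
  have f: "f < m" "f \<noteq> g" "f \<noteq> h" and uw: "(u, w) \<in> {(i, j), (i, k), (j, k)}"
    using y by (auto simp: other_pairs_def y_eq)
  have "exact_wedge_at g h \<inter> shares_group y =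
      {B. (\<forall>x\<in>{(i, g), (k, g), (j, h), (k, h), (u, f), (w, f)}. B x) \<and> (\<forall>x\<in>{(j, g), (i, h)}. \<not> B x)}"
    by (auto simp: exact_wedge_at_def shares_group_def y_eq)
  also have "P \<dots> = a * b * c\<^sup>2 * (1 - a) * (1 - b) * (p u * p w)"
    using uw
  proof (elim insertE emptyE)
    assume "(u, w) = (i, j)"
    then show ?thesis
      by (subst prob_cylinder) (use gh vertices f in \<open>auto simp: distinct_pairs_def power2_eq_square\<close>)
  next
    assume "(u, w) = (i, k)"
    then show ?thesis
      by (subst prob_cylinder) (use gh vertices f in \<open>auto simp: distinct_pairs_def power2_eq_square\<close>)
  next
    assume "(u, w) = (j, k)"
    then show ?thesis
      by (subst prob_cylinder) (use gh vertices f in \<open>auto simp: distinct_pairs_def power2_eq_square\<close>)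
  qed
  finally show ?thesis by (simp add: y_eq)
qed

lemma prob_clean_wedge_at_ge:
  assumes gh: "(g, h) \<in> distinct_pairs"
  shows "a * b * c\<^sup>2 * (1 - a) * (1 - b) * (1 - m * (a * b + a * c + b * c)) \<le> P (clean_wedge_at g h)"
proof -
  define q where "q = a * b * c\<^sup>2 * (1 - a) * (1 - b)"
  have q0: "0 \<le> q" using probs by (simp add: q_def)
  have "(\<Sum>y\<in>other_pairs g h. P (exact_wedge_at g h \<inter> shares_group y))
      = (\<Sum>y\<in>other_pairs g h. q * (p (fst (snd y)) * p (snd (snd y))))"
    by (intro sum.cong) (auto simp: prob_exact_wedge_at_shares_group[OF gh] q_def)
  also have "\<dots> = (\<Sum>f\<in>{..<m} - {g, h}. \<Sum>uw\<in>{(i, j), (i, k), (j, k)}. q * (p (fst uw) * p (snd uw)))"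
    unfolding other_pairs_def by (subst sum.cartesian_product) (rule sum.cong, auto)
  also have "\<dots> = (\<Sum>f\<in>{..<m} - {g, h}. q * (a * b + a * c + b * c))"
    by (intro sum.cong) (use vertices in \<open>auto simp: algebra_simps\<close>)
  also have "\<dots> = card ({..<m} - {g, h}) * (q * (a * b + a * c + b * c))" by simp
  also have "\<dots> \<le> m * (q * (a * b + a * c + b * c))"
  proof (rule mult_right_mono)
    have "card ({..<m} - {g, h}) \<le> card {..<m}" by (rule card_mono) auto
    then show "real (card ({..<m} - {g, h})) \<le> real m" by simp
  qed (use q0 probs in simp)
  finally have sum_le: "(\<Sum>y\<in>other_pairs g h. P (exact_wedge_at g h \<inter> shares_group y))
      \<le> m * (q * (a * b + a * c + b * c))" .
  have "q * (1 - m * (a * b + a * c + b * c))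
      = P (exact_wedge_at g h) - m * (q * (a * b + a * c + b * c))"
    using prob_exact_wedge_at[OF gh] by (simp add: q_def algebra_simps)
  also have "\<dots> \<le> P (exact_wedge_at g h) - (\<Sum>y\<in>other_pairs g h. P (exact_wedge_at g h \<inter> shares_group y))"
    using sum_le by linarith
  also have "\<dots> \<le> P (clean_wedge_at g h)"
    unfolding clean_wedge_at_def by (rule measure_pmf_Diff_UN_ge) (simp add: other_pairs_def)
  finally show ?thesis by (simp add: q_def)
qed

lemma disjoint_clean_wedge_at: "disjoint_family_on (\<lambda>x. clean_wedge_at (fst x) (snd x)) distinct_pairs"
proof (unfold disjoint_family_on_def, intro ballI impI)
  fix x y assume x: "x \<in> distinct_pairs" and y: "y \<in> distinct_pairs" and xy: "x \<noteq> y"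
  obtain g h g' h' where xx: "x = (g, h)" and yy: "y = (g', h')" by (cases x, cases y)
  have m: "g < m" "h < m" "g' < m" "h' < m" using x y xx yy by (auto simp: distinct_pairs_def)
  show "clean_wedge_at (fst x) (snd x) \<inter> clean_wedge_at (fst y) (snd y) = {}"
  proof (rule ccontr)
    assume "clean_wedge_at (fst x) (snd x) \<inter> clean_wedge_at (fst y) (snd y) \<noteq> {}"
    then obtain B where B: "B \<in> clean_wedge_at g h" "B \<in> clean_wedge_at g' h'" using xx yy by auto
    show False
    proof (cases "g = g'")
      case False
      have "g' \<noteq> h" using B by (auto simp: clean_wedge_at_def exact_wedge_at_def)
      then have "(g', i, k) \<in> other_pairs g h" using False m by (auto simp: other_pairs_def)
      then show False using B by (auto simp: clean_wedge_at_def exact_wedge_at_def shares_group_def)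
    next
      case True
      then have "h \<noteq> h'" using xy xx yy by auto
      moreover have "h' \<noteq> g" using B by (auto simp: clean_wedge_at_def exact_wedge_at_def)
      ultimately have "(h', j, k) \<in> other_pairs g h" using m by (auto simp: other_pairs_def)
      then show False using B by (auto simp: clean_wedge_at_def exact_wedge_at_def shares_group_def)
    qed
  qed
qed

lemma clean_wedge_at_subset:
  "(\<Union>x\<in>distinct_pairs. clean_wedge_at (fst x) (snd x)) \<subseteq> wedge_event - some_triple"
proof
  fix B assume "B \<in> (\<Union>x\<in>distinct_pairs. clean_wedge_at (fst x) (snd x))"
  then obtain g h where gh: "(g, h) \<in> distinct_pairs" and B: "B \<in> clean_wedge_at g h" by auto
  have "B \<in> wedge_event"
    using B gh
    by (auto simp: distinct_pairs_def clean_wedge_at_def exact_wedge_at_def wedge_event_def common_group_def)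
  moreover have "B \<notin> some_triple"
  proof
    assume "B \<in> some_triple"
    then obtain f where f: "f < m" "B (i, f)" "B (j, f)" "B (k, f)" by (auto simp: some_triple_def)
    then have "f \<noteq> g" "f \<noteq> h" using B by (auto simp: clean_wedge_at_def exact_wedge_at_def)
    then have "(f, i, j) \<in> other_pairs g h" using f by (auto simp: other_pairs_def)
    then show False using B f by (auto simp: clean_wedge_at_def shares_group_def)
  qed
  ultimately show "B \<in> wedge_event - some_triple" by auto
qed

lemma prob_wedge_Diff_ge:
  "m * (m - 1) * (a * b * c\<^sup>2 * (1 - a) * (1 - b) * (1 - m * (a * b + a * c + b * c)))
    \<le> P (wedge_event - some_triple)"
proof -
  have "m * (m - 1) * (a * b * c\<^sup>2 * (1 - a) * (1 - b) * (1 - m * (a * b + a * c + b * c)))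
      = (\<Sum>x\<in>distinct_pairs. a * b * c\<^sup>2 * (1 - a) * (1 - b) * (1 - m * (a * b + a * c + b * c)))"
    by (simp add: card_distinct_pairs of_nat_diff)
  also have "\<dots> \<le> (\<Sum>x\<in>distinct_pairs. P (clean_wedge_at (fst x) (snd x)))"
    by (intro sum_mono prob_clean_wedge_at_ge) auto
  also have "\<dots> = P (\<Union>x\<in>distinct_pairs. clean_wedge_at (fst x) (snd x))"
    by (rule measure_pmf.finite_measure_finite_Union[symmetric])
       (use disjoint_clean_wedge_at finite_distinct_pairs in auto)
  also have "\<dots> \<le> P (wedge_event - some_triple)"
    by (rule measure_pmf.finite_measure_mono[OF clean_wedge_at_subset]) auto
  finally show ?thesis .
qed

lemma prob_triangle_at: "x \<in> distinct_triples \<Longrightarrow> P (triangle_at x) = a\<^sup>2 * b\<^sup>2 * c\<^sup>2"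
proof -
  assume x: "x \<in> distinct_triples"
  obtain g h l where x_eq: "x = (g, h, l)" by (cases x) auto
  have "triangle_at x =
      {B. (\<forall>y\<in>{(i, g), (j, g), (i, h), (k, h), (j, l), (k, l)}. B y) \<and> (\<forall>y\<in>{}. \<not> B y)}"
    by (auto simp: triangle_at_def x_eq)
  also have "P \<dots> = a\<^sup>2 * b\<^sup>2 * c\<^sup>2"
    by (subst prob_cylinder) (use x vertices in \<open>auto simp: distinct_triples_def x_eq power2_eq_square\<close>)
  finally show ?thesis .
qed

lemma prob_triangle_Diff_le: "P (triangle_event - some_triple) \<le> m ^ 3 * (a\<^sup>2 * b\<^sup>2 * c\<^sup>2)"
proof -
  have sub: "distinct_triples \<subseteq> {..<m} \<times> {..<m} \<times> {..<m}" by (auto simp: distinct_triples_def)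
  have "triangle_event - some_triple \<subseteq> (\<Union>x\<in>distinct_triples. triangle_at x)"
  proof
    fix B assume "B \<in> triangle_event - some_triple"
    then obtain g h l where g: "g < m" "B (i, g)" "B (j, g)" and h: "h < m" "B (i, h)" "B (k, h)"
      and l: "l < m" "B (j, l)" "B (k, l)" and "B \<notin> some_triple"
      by (auto simp: triangle_event_def common_group_def)
    then have "g \<noteq> h" "g \<noteq> l" "h \<noteq> l" by (auto simp: some_triple_def)
    then show "B \<in> (\<Union>x\<in>distinct_triples. triangle_at x)" using g h l
      by (auto simp: distinct_triples_def triangle_at_def intro!: bexI[of _ "(g, h, l)"])
  qed
  then have "P (triangle_event - some_triple) \<le> P (\<Union>x\<in>distinct_triples. triangle_at x)"
    by (rule measure_pmf.finite_measure_mono) auto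
  also have "\<dots> \<le> (\<Sum>x\<in>distinct_triples. P (triangle_at x))"
    by (rule measure_pmf.finite_measure_subadditive_finite) (auto intro: finite_subset[OF sub])
  also have "\<dots> = card distinct_triples * (a\<^sup>2 * b\<^sup>2 * c\<^sup>2)" by (simp add: prob_triangle_at)
  also have "\<dots> \<le> m ^ 3 * (a\<^sup>2 * b\<^sup>2 * c\<^sup>2)"
  proof -
    have "card distinct_triples \<le> card ({..<m} \<times> {..<m} \<times> {..<m})" by (rule card_mono[OF _ sub]) auto
    then have "card distinct_triples \<le> m ^ 3" by (simp add: card_cartesian_product power3_eq_cube)
    then show ?thesis by (intro mult_right_mono) simp_all
  qed
  finally show ?thesis .
qed

lemma cond_clust_eq:
  "cond_clust n m p i j k
    = (P some_triple + P (triangle_event - some_triple)) / (P some_triple + P (wedge_event - some_triple))"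
proof -
  have sub: "some_triple \<subseteq> triangle_event" "some_triple \<subseteq> wedge_event"
    by (auto simp: some_triple_def triangle_event_def wedge_event_def common_group_def)
  have "P triangle_event = P some_triple + P (triangle_event - some_triple)"
    and "P wedge_event = P some_triple + P (wedge_event - some_triple)"
    using measure_pmf.finite_measure_Diff[OF _ _ sub(1)] measure_pmf.finite_measure_Diff[OF _ _ sub(2)]
    by simp_all
  then show ?thesis by (simp add: cond_clust_def triangle_event_def wedge_event_def)
qed

lemma cond_clust_bounds:
  fixes x q :: real
  defines "x \<equiv> m * a * b * c" and "q \<equiv> (1 - a) * (1 - b) * (1 - m * (a * b + a * c + b * c))"
  assumes m: "m \<ge> 1" and abc: "0 < a" "0 < b" "0 < c" and den: "0 < 1 - x + q * ((real m - 1) * c)"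
  shows "(1 - x) / (1 + m * c) \<le> cond_clust n m p i j k"
    and "cond_clust n m p i j k \<le> (1 + m\<^sup>2 * a * b * c) / (1 - x + q * ((real m - 1) * c))"
proof -
  have x: "0 < x" using m abc by (simp add: x_def)
  have "x * (1 - x) = m * (a * b * c) * (1 - m * (a * b * c))" "x = m * (a * b * c)"
    by (simp_all add: x_def mult.assoc)
  then have t: "x * (1 - x) \<le> P some_triple" "P some_triple \<le> x"
    using prob_some_triple_ge prob_some_triple_le by simp_all
  have "x * (m\<^sup>2 * a * b * c) = m ^ 3 * (a\<^sup>2 * b\<^sup>2 * c\<^sup>2)"
    by (simp add: x_def power2_eq_square power3_eq_cube)
  then have r: "P (triangle_event - some_triple) \<le> x * (m\<^sup>2 * a * b * c)"
    using prob_triangle_Diff_le by simp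
  have "x * (q * ((real m - 1) * c))
      = m * (m - 1) * (a * b * c\<^sup>2 * (1 - a) * (1 - b) * (1 - m * (a * b + a * c + b * c)))"
    using m by (simp add: x_def q_def of_nat_diff power2_eq_square)
  moreover have "x * (m * c) = m\<^sup>2 * (a * b * c\<^sup>2)"
    by (simp add: x_def power2_eq_square)
  ultimately have s: "x * (q * ((real m - 1) * c)) \<le> P (wedge_event - some_triple)"
      "P (wedge_event - some_triple) \<le> x * (m * c)"
    using prob_wedge_Diff_ge prob_wedge_Diff_le by simp_all
  show "(1 - x) / (1 + m * c) \<le> cond_clust n m p i j k"
    unfolding cond_clust_eq by (rule ratio_sandwich(1)[OF x t(1) _ t(2) _ r s den]) simp_all
  show "cond_clust n m p i j k \<le> (1 + m\<^sup>2 * a * b * c) / (1 - x + q * ((real m - 1) * c))"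
    unfolding cond_clust_eq by (rule ratio_sandwich(2)[OF x t(1) _ t(2) _ r s den]) simp_all
qed

end

section \<open>Asymptotics for fixed weights\<close>

locale clustering_limit =
  fixes \<alpha> \<beta> \<gamma> :: real and w :: "nat \<Rightarrow> real" and i j k :: nat
  assumes params: "\<alpha> > 0" "\<beta> > 0" "\<gamma> > 0"
    and weights: "w i > 0" "w j > 0" "w k > 0"
    and vertices: "i \<ge> 1" "j \<ge> 1" "k \<ge> 1" "i \<noteq> j" "i \<noteq> k" "j \<noteq> k"
begin

definition "groups n = real (num_groups \<alpha> \<beta> n)"
definition "base_prob n = real n powr (-(1 + \<alpha>) / 2)"

lemma groups_bounds: "\<beta> * real n powr \<alpha> - 1 \<le> groups n" "groups n \<le> \<beta> * real n powr \<alpha>"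
proof -
  have "groups n = real_of_int \<lfloor>\<beta> * real n powr \<alpha>\<rfloor>"
    unfolding groups_def num_groups_def using params by (simp add: of_nat_nat)
  then show "\<beta> * real n powr \<alpha> - 1 \<le> groups n" "groups n \<le> \<beta> * real n powr \<alpha>"
    using of_int_floor_le[of "\<beta> * real n powr \<alpha>"] real_of_int_floor_gt_diff_one[of "\<beta> * real n powr \<alpha>"]
    by linarith+
qed

lemma groups_nonneg: "0 \<le> groups n"
  by (simp add: groups_def)

lemma groups_at_top: "filterlim groups at_top sequentially"
proof -
  have "filterlim (\<lambda>n. real n powr \<alpha>) at_top sequentially"
    by (rule filterlim_compose[OF real_powr_at_top[OF params(1)] filterlim_real_sequentially])
  then have "filterlim (\<lambda>n. (-1) + \<beta> * real n powr \<alpha>) at_top sequentially"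
    by (intro filterlim_tendsto_add_at_top[OF tendsto_const]
        filterlim_tendsto_pos_mult_at_top[OF tendsto_const params(2)])
  then show ?thesis
    by (rule filterlim_at_top_mono) (use groups_bounds in auto)
qed

lemma base_prob_tendsto_0: "(\<lambda>n. x * base_prob n) \<longlonglongrightarrow> 0"
proof -
  have "base_prob \<longlonglongrightarrow> 0"
    unfolding base_prob_def
    by (rule tendsto_neg_powr[OF _ filterlim_real_sequentially]) (use params in simp)
  from tendsto_mult[OF tendsto_const this, of x] show ?thesis by simp
qed

lemma powr_mult_base_prob: "n > 0 \<Longrightarrow> real n powr \<alpha> * base_prob n = real n powr ((\<alpha> - 1) / 2)"
  by (simp add: base_prob_def powr_add[symmetric] field_simps)

lemma powr_mult_base_prob_sq: "n > 0 \<Longrightarrow> real n powr \<alpha> * (base_prob n * base_prob n) = 1 / real n"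
proof -
  assume n: "n > 0"
  have "real n powr \<alpha> * (base_prob n * base_prob n) = real n powr (\<alpha> + (-(1 + \<alpha>) / 2) + (-(1 + \<alpha>) / 2))"
    unfolding base_prob_def powr_add by (simp add: mult.assoc)
  also have "\<alpha> + (-(1 + \<alpha>) / 2) + (-(1 + \<alpha>) / 2) = -1" by (simp add: field_simps)
  finally show ?thesis using n by (simp add: powr_minus divide_inverse)
qed

lemma groups_base_prob_sq_tendsto_0:
  assumes "x > 0" "y > 0"
  shows "(\<lambda>n. groups n * (x * base_prob n) * (y * base_prob n)) \<longlonglongrightarrow> 0"
proof (rule tendsto_sandwich[of "\<lambda>_. 0" _ _ "\<lambda>n. \<beta> * x * y * (1 / real n)"])
  show "eventually (\<lambda>n. 0 \<le> groups n * (x * base_prob n) * (y * base_prob n)) sequentially"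
    using assms groups_nonneg by (intro always_eventually allI) (simp add: base_prob_def)
  show "eventually (\<lambda>n. groups n * (x * base_prob n) * (y * base_prob n) \<le> \<beta> * x * y * (1 / real n))
      sequentially"
    using eventually_gt_at_top[of 0]
  proof eventually_elim
    case (elim n)
    have "groups n * (x * base_prob n) * (y * base_prob n)
        = groups n * (x * y * (base_prob n * base_prob n))"
      by (simp add: algebra_simps)
    also have "\<dots> \<le> \<beta> * real n powr \<alpha> * (x * y * (base_prob n * base_prob n))"
      by (rule mult_right_mono[OF groups_bounds(2)]) (use assms in simp)
    also have "\<dots> = \<beta> * x * y * (1 / real n)"
      using powr_mult_base_prob_sq[OF elim] by (simp add: algebra_simps)
    finally show ?case .
  qed
  show "(\<lambda>n. \<beta> * x * y * (1 / real n)) \<longlonglongrightarrow> 0"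
    using tendsto_mult[OF tendsto_const lim_const_over_n[of 1], of "\<beta> * x * y"] by simp
qed simp

lemma groups_base_prob_le:
  assumes "x > 0" "n > 0"
  shows "groups n * (x * base_prob n) \<le> \<beta> * x * real n powr ((\<alpha> - 1) / 2)"
proof -
  have "groups n * (x * base_prob n) \<le> \<beta> * real n powr \<alpha> * (x * base_prob n)"
    by (rule mult_right_mono[OF groups_bounds(2)]) (use assms in \<open>simp add: base_prob_def\<close>)
  also have "\<dots> = \<beta> * x * real n powr ((\<alpha> - 1) / 2)"
    using powr_mult_base_prob[OF assms(2)] by (simp add: algebra_simps)
  finally show ?thesis .
qed

lemma groups_base_prob_ge:
  assumes "x > 0" "n > 0"
  shows "\<beta> * x * real n powr ((\<alpha> - 1) / 2) - x * base_prob n \<le> groups n * (x * base_prob n)"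
proof -
  have "\<beta> * x * real n powr ((\<alpha> - 1) / 2) - x * base_prob n
      = (\<beta> * real n powr \<alpha> - 1) * (x * base_prob n)"
    using powr_mult_base_prob[OF assms(2)] by (simp add: algebra_simps)
  also have "\<dots> \<le> groups n * (x * base_prob n)"
    by (rule mult_right_mono[OF groups_bounds(1)]) (use assms in \<open>simp add: base_prob_def\<close>)
  finally show ?thesis .
qed

lemma groups_base_prob_tendsto_0:
  assumes "\<alpha> < 1" "x > 0"
  shows "(\<lambda>n. groups n * (x * base_prob n)) \<longlonglongrightarrow> 0"
proof (rule tendsto_sandwich[of "\<lambda>_. 0" _ _ "\<lambda>n. \<beta> * x * real n powr ((\<alpha> - 1) / 2)"])
  show "eventually (\<lambda>n. 0 \<le> groups n * (x * base_prob n)) sequentially"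
    using assms groups_nonneg by (intro always_eventually allI) (simp add: base_prob_def)
  show "eventually (\<lambda>n. groups n * (x * base_prob n) \<le> \<beta> * x * real n powr ((\<alpha> - 1) / 2)) sequentially"
    using eventually_gt_at_top[of 0] by eventually_elim (rule groups_base_prob_le[OF assms(2)])
  have "(\<lambda>n. real n powr ((\<alpha> - 1) / 2)) \<longlonglongrightarrow> 0"
    by (rule tendsto_neg_powr[OF _ filterlim_real_sequentially]) (use assms in simp)
  from tendsto_mult[OF tendsto_const this, of "\<beta> * x"]
  show "(\<lambda>n. \<beta> * x * real n powr ((\<alpha> - 1) / 2)) \<longlonglongrightarrow> 0" by simp
qed simp

lemma groups_base_prob_tendsto:
  assumes "\<alpha> = 1" "x > 0"
  shows "(\<lambda>n. groups n * (x * base_prob n)) \<longlonglongrightarrow> \<beta> * x"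
proof (rule tendsto_sandwich[of "\<lambda>n. \<beta> * x - x * base_prob n" _ _ "\<lambda>_. \<beta> * x"])
  show "eventually (\<lambda>n. \<beta> * x - x * base_prob n \<le> groups n * (x * base_prob n)) sequentially"
    using eventually_gt_at_top[of 0] by eventually_elim (use groups_base_prob_ge[OF assms(2)] assms in auto)
  show "eventually (\<lambda>n. groups n * (x * base_prob n) \<le> \<beta> * x) sequentially"
    using eventually_gt_at_top[of 0] by eventually_elim (use groups_base_prob_le[OF assms(2)] assms in auto)
  show "(\<lambda>n. \<beta> * x - x * base_prob n) \<longlonglongrightarrow> \<beta> * x"
    using tendsto_diff[OF tendsto_const base_prob_tendsto_0, of "\<beta> * x" x] by simp
qed simp

lemma groups_base_prob_at_top:
  assumes "\<alpha> > 1" "x > 0"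
  shows "filterlim (\<lambda>n. (groups n - 1) * (x * base_prob n)) at_top sequentially"
proof -
  have "filterlim (\<lambda>n. real n powr ((\<alpha> - 1) / 2)) at_top sequentially"
    by (rule filterlim_compose[OF real_powr_at_top filterlim_real_sequentially]) (use assms in simp)
  then have "filterlim (\<lambda>n. \<beta> * x * real n powr ((\<alpha> - 1) / 2)) at_top sequentially"
    by (intro filterlim_tendsto_pos_mult_at_top[OF tendsto_const]) (use params assms in simp_all)
  moreover have "(\<lambda>n. - 2 * (x * base_prob n)) \<longlonglongrightarrow> 0"
    using tendsto_mult[OF tendsto_const base_prob_tendsto_0, of "-2" x] by simp
  ultimately have "filterlim (\<lambda>n. - 2 * (x * base_prob n) + \<beta> * x * real n powr ((\<alpha> - 1) / 2))
      at_top sequentially"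
    by (intro filterlim_tendsto_add_at_top)
  then show ?thesis
  proof (rule filterlim_at_top_mono)
    show "eventually (\<lambda>n. - 2 * (x * base_prob n) + \<beta> * x * real n powr ((\<alpha> - 1) / 2)
        \<le> (groups n - 1) * (x * base_prob n)) sequentially"
      using eventually_gt_at_top[of 0]
      by eventually_elim (use groups_base_prob_ge[OF assms(2)] in \<open>force simp: algebra_simps\<close>)
  qed
qed

definition "prob l n = \<gamma> * w l * base_prob n"
definition "clust n = cond_clust n (num_groups \<alpha> \<beta> n) (\<lambda>l. edge_prob \<alpha> \<gamma> n (w l)) i j k"
definition "triple_mean n = groups n * prob i n * prob j n * prob k n"
definition "separation n = (1 - prob i n) * (1 - prob j n)
   * (1 - groups n * (prob i n * prob j n + prob i n * prob k n + prob j n * prob k n))"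
definition "clust_lower n = (1 - triple_mean n) / (1 + groups n * prob k n)"
definition "clust_upper n = (1 + (groups n)\<^sup>2 * prob i n * prob j n * prob k n)
   / (1 - triple_mean n + separation n * ((groups n - 1) * prob k n))"

lemma prob_pos: "l \<in> {i, j, k} \<Longrightarrow> n > 0 \<Longrightarrow> prob l n > 0"
  using weights params by (auto simp: prob_def base_prob_def)

lemma prob_nonneg: "l \<in> {i, j, k} \<Longrightarrow> 0 \<le> prob l n"
  using weights params by (auto simp: prob_def base_prob_def)

lemma prob_tendsto_0: "prob l \<longlonglongrightarrow> 0"
  unfolding prob_def by (rule base_prob_tendsto_0)

lemma groups_prob_prob_tendsto_0:
  "w l > 0 \<Longrightarrow> w l' > 0 \<Longrightarrow> (\<lambda>n. groups n * prob l n * prob l' n) \<longlonglongrightarrow> 0"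
  unfolding prob_def by (rule groups_base_prob_sq_tendsto_0) (use params in simp_all)

lemma triple_mean_tendsto_0: "triple_mean \<longlonglongrightarrow> 0"
  unfolding triple_mean_def
  using tendsto_mult[OF groups_prob_prob_tendsto_0[OF weights(1,2)] prob_tendsto_0[of k]] by simp

lemma separation_tendsto_1: "separation \<longlonglongrightarrow> 1"
proof -
  have "(\<lambda>n. groups n * (prob i n * prob j n + prob i n * prob k n + prob j n * prob k n)) \<longlonglongrightarrow> 0 + 0 + 0"
    using tendsto_add[OF tendsto_add[OF groups_prob_prob_tendsto_0[OF weights(1,2)]
        groups_prob_prob_tendsto_0[OF weights(1,3)]] groups_prob_prob_tendsto_0[OF weights(2,3)]]
    by (simp add: algebra_simps)
  from tendsto_mult[OF tendsto_mult[OF tendsto_diff[OF tendsto_const prob_tendsto_0]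
      tendsto_diff[OF tendsto_const prob_tendsto_0]] tendsto_diff[OF tendsto_const this], of 1 i 1 j 1]
  show ?thesis unfolding separation_def by simp
qed

lemma clust_between: "eventually (\<lambda>n. clust_lower n \<le> clust n \<and> clust n \<le> clust_upper n) sequentially"
proof -
  have "eventually (\<lambda>n. n \<ge> i \<and> n \<ge> j \<and> n \<ge> k \<and> prob i n < 1 \<and> prob j n < 1 \<and> prob k n < 1
      \<and> groups n \<ge> 1 \<and> triple_mean n < 1 \<and> separation n > 0) sequentially"
    using eventually_ge_at_top[of i] eventually_ge_at_top[of j] eventually_ge_at_top[of k]
      order_tendstoD(2)[OF prob_tendsto_0 zero_less_one, of i]
      order_tendstoD(2)[OF prob_tendsto_0 zero_less_one, of j]
      order_tendstoD(2)[OF prob_tendsto_0 zero_less_one, of k]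
      filterlim_at_top[THEN iffD1, OF groups_at_top, rule_format, of 1]
      order_tendstoD(2)[OF triple_mean_tendsto_0 zero_less_one]
      order_tendstoD(1)[OF separation_tendsto_1 zero_less_one]
    by eventually_elim auto
  then show ?thesis
  proof eventually_elim
    case (elim n)
    then have lt1: "prob i n < 1" "prob j n < 1" "prob k n < 1"
      and m: "num_groups \<alpha> \<beta> n \<ge> 1" and "n > 0"
      using vertices by (auto simp: groups_def)
    then have pos: "prob i n > 0" "prob j n > 0" "prob k n > 0" by (simp_all add: prob_pos)
    have edge: "edge_prob \<alpha> \<gamma> n (w l) = prob l n" if "prob l n < 1" for l
      using that by (simp add: edge_prob_def prob_def base_prob_def)
    interpret three_vertices n "num_groups \<alpha> \<beta> n" "\<lambda>l. edge_prob \<alpha> \<gamma> n (w l)" i j k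
      by unfold_locales (use elim vertices pos lt1 in \<open>auto simp: edge\<close>)
    have "0 \<le> separation n * ((groups n - 1) * prob k n)" using elim pos by simp
    then have den: "0 < 1 - triple_mean n + separation n * ((groups n - 1) * prob k n)"
      using elim by linarith
    note bounds = cond_clust_bounds[OF m, unfolded edge[OF lt1(1)] edge[OF lt1(2)] edge[OF lt1(3)]]
    show ?case
      using bounds[OF pos] den
      by (simp add: clust_def clust_lower_def clust_upper_def triple_mean_def separation_def groups_def)
  qed
qed

lemma clust_tendsto:
  assumes L: "(\<lambda>n. groups n * prob k n) \<longlonglongrightarrow> L"
  shows "clust \<longlonglongrightarrow> 1 / (1 + L)"
proof (rule tendsto_sandwich[OF eventually_mono[OF clust_between] eventually_mono[OF clust_between]])
  have "0 \<le> L"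
    by (rule tendsto_lowerbound[OF L]) (use groups_nonneg prob_nonneg in \<open>auto intro!: always_eventually\<close>)
  have \<rho>: "(\<lambda>n. (groups n)\<^sup>2 * prob i n * prob j n * prob k n) \<longlonglongrightarrow> 0 * L"
    using tendsto_mult[OF groups_prob_prob_tendsto_0[OF weights(1,2)] L]
    by (simp add: power2_eq_square algebra_simps)
  have \<sigma>: "(\<lambda>n. (groups n - 1) * prob k n) \<longlonglongrightarrow> L - 0"
    using tendsto_diff[OF L prob_tendsto_0[of k]] by (simp add: algebra_simps)
  show "clust_lower \<longlonglongrightarrow> 1 / (1 + L)"
    using tendsto_divide[OF tendsto_diff[OF tendsto_const triple_mean_tendsto_0]
        tendsto_add[OF tendsto_const L], of 1 1] \<open>0 \<le> L\<close>
    unfolding clust_lower_def by simp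
  show "clust_upper \<longlonglongrightarrow> 1 / (1 + L)"
    using tendsto_divide[OF tendsto_add[OF tendsto_const \<rho>]
        tendsto_add[OF tendsto_diff[OF tendsto_const triple_mean_tendsto_0]
          tendsto_mult[OF separation_tendsto_1 \<sigma>]], of 1 1] \<open>0 \<le> L\<close>
    unfolding clust_upper_def by simp
qed auto

lemma clust_tendsto_0:
  assumes "\<alpha> > 1"
  shows "clust \<longlonglongrightarrow> 0"
proof (rule tendsto_sandwich[OF eventually_mono[OF clust_between] eventually_mono[OF clust_between]])
  define \<sigma> where "\<sigma> n = separation n * ((groups n - 1) * prob k n)" for n
  have lin: "filterlim (\<lambda>n. (groups n - 1) * prob k n) at_top sequentially"
    unfolding prob_def using groups_base_prob_at_top[OF assms, of "\<gamma> * w k"] params weights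
    by (simp add: mult.assoc)
  have "filterlim (\<lambda>n. 1 + groups n * prob k n) at_infinity sequentially"
  proof (rule filterlim_at_top_imp_at_infinity, rule filterlim_at_top_mono[OF lin])
    show "eventually (\<lambda>n. (groups n - 1) * prob k n \<le> 1 + groups n * prob k n) sequentially"
      using prob_nonneg[of k] by (intro always_eventually allI) (simp add: algebra_simps)
  qed
  then show "clust_lower \<longlonglongrightarrow> 0"
    unfolding clust_lower_def
    by (rule tendsto_divide_0[OF tendsto_diff[OF tendsto_const triple_mean_tendsto_0]])
  have \<sigma>_top: "filterlim \<sigma> at_top sequentially"
    unfolding \<sigma>_def by (rule filterlim_tendsto_pos_mult_at_top[OF separation_tendsto_1 _ lin]) simp
  then have inv_\<sigma>: "(\<lambda>n. 1 / \<sigma> n) \<longlonglongrightarrow> 0"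
    by (intro tendsto_divide_0[OF tendsto_const] filterlim_at_top_imp_at_infinity)
  have "filterlim (\<lambda>n. -1 + groups n) at_top sequentially"
    by (rule filterlim_tendsto_add_at_top[OF tendsto_const groups_at_top])
  then have "(\<lambda>n. 1 / (groups n - 1)) \<longlonglongrightarrow> 0"
    by (intro tendsto_divide_0[OF tendsto_const] filterlim_at_top_imp_at_infinity) simp
  then have "(\<lambda>n. groups n * prob i n * prob j n * (1 + 1 / (groups n - 1)) / separation n)
      \<longlonglongrightarrow> 0 * (1 + 0) / 1"
    by (intro tendsto_intros groups_prob_prob_tendsto_0 weights separation_tendsto_1) simp_all
  moreover have "eventually (\<lambda>n. groups n * prob i n * prob j n * (1 + 1 / (groups n - 1)) / separation n
      = (groups n)\<^sup>2 * prob i n * prob j n * prob k n / \<sigma> n) sequentially"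
    using filterlim_at_top[THEN iffD1, OF groups_at_top, rule_format, of 2] eventually_gt_at_top[of 0]
      order_tendstoD(1)[OF separation_tendsto_1 zero_less_one]
  proof eventually_elim
    case (elim n)
    with prob_pos[of k n] show ?case by (simp add: \<sigma>_def field_simps power2_eq_square)
  qed
  ultimately have \<rho>_\<sigma>: "(\<lambda>n. (groups n)\<^sup>2 * prob i n * prob j n * prob k n / \<sigma> n) \<longlonglongrightarrow> 0"
    by (simp add: Lim_transform_eventually)
  have "(\<lambda>n. (1 / \<sigma> n + (groups n)\<^sup>2 * prob i n * prob j n * prob k n / \<sigma> n)
      / ((1 - triple_mean n) * (1 / \<sigma> n) + 1)) \<longlonglongrightarrow> (0 + 0) / ((1 - 0) * 0 + 1)"
    by (intro tendsto_intros inv_\<sigma> \<rho>_\<sigma> triple_mean_tendsto_0) simp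
  moreover have "eventually (\<lambda>n. (1 / \<sigma> n + (groups n)\<^sup>2 * prob i n * prob j n * prob k n / \<sigma> n)
      / ((1 - triple_mean n) * (1 / \<sigma> n) + 1) = clust_upper n) sequentially"
    using \<sigma>_top[THEN filterlim_at_top[THEN iffD1], rule_format, of 1]
  proof eventually_elim
    case (elim n)
    then have \<sigma>: "\<sigma> n \<noteq> 0" by auto
    have "(1 - triple_mean n) * (1 / \<sigma> n) + 1 = (1 - triple_mean n + \<sigma> n) / \<sigma> n"
      using \<sigma> by (simp add: field_simps)
    then show ?case
      unfolding clust_upper_def \<sigma>_def[symmetric] using \<sigma> by (simp add: add_divide_distrib[symmetric])
  qed
  ultimately show "clust_upper \<longlonglongrightarrow> 0"
    by (simp add: Lim_transform_eventually)
qed auto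

lemma clust_limits:
  "(\<alpha> < 1 \<longrightarrow> clust \<longlonglongrightarrow> 1) \<and> (\<alpha> = 1 \<longrightarrow> clust \<longlonglongrightarrow> 1 / (1 + \<beta> * \<gamma> * w k)) \<and> (\<alpha> > 1 \<longrightarrow> clust \<longlonglongrightarrow> 0)"
proof (intro conjI impI)
  have wk: "\<gamma> * w k > 0" using params weights by simp
  show "clust \<longlonglongrightarrow> 1" if "\<alpha> < 1"
  proof -
    have "(\<lambda>n. groups n * prob k n) \<longlonglongrightarrow> 0"
      unfolding prob_def by (rule groups_base_prob_tendsto_0[OF that wk])
    then show ?thesis using clust_tendsto by fastforce
  qed
  show "clust \<longlonglongrightarrow> 1 / (1 + \<beta> * \<gamma> * w k)" if "\<alpha> = 1"
  proof -
    have "(\<lambda>n. groups n * prob k n) \<longlonglongrightarrow> \<beta> * \<gamma> * w k"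
      unfolding prob_def using groups_base_prob_tendsto[OF that wk] by (simp add: mult.assoc)
    then show ?thesis by (rule clust_tendsto)
  qed
  show "clust \<longlonglongrightarrow> 0" if "\<alpha> > 1"
    using clust_tendsto_0[OF that] .
qed

end

section \<open>Random weights\<close>

lemma measurable_prob_Pi_bernoulli:
  assumes A: "finite A" and q: "\<And>x. (\<lambda>\<omega>. q x \<omega>) \<in> borel_measurable M"
  shows "(\<lambda>\<omega>. measure_pmf.prob (Pi_pmf A dflt (\<lambda>x. bernoulli_pmf (q x \<omega>))) S) \<in> borel_measurable M"
proof -
  define Fs where "Fs = PiE_dflt A dflt (\<lambda>_. UNIV :: bool set)"
  define pr where "pr x \<omega> t = (if t then min 1 (max 0 (q x \<omega>)) else 1 - min 1 (max 0 (q x \<omega>)))" for x \<omega> t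
  have "finite Fs" unfolding Fs_def using A by auto
  have eq: "measure_pmf.prob (Pi_pmf A dflt (\<lambda>x. bernoulli_pmf (q x \<omega>))) S
      = (\<Sum>f\<in>S \<inter> Fs. \<Prod>x\<in>A. pr x \<omega> (f x))" for \<omega>
  proof -
    let ?Q = "Pi_pmf A dflt (\<lambda>x. bernoulli_pmf (q x \<omega>))"
    have "set_pmf ?Q \<subseteq> Fs"
      using set_Pi_pmf_subset[OF A, of dflt "\<lambda>x. bernoulli_pmf (q x \<omega>)"]
      by (auto simp: Fs_def PiE_dflt_def)
    then have "measure_pmf.prob ?Q S = measure_pmf.prob ?Q (S \<inter> Fs)"
      by (metis (no_types, lifting) Int_absorb2 Int_assoc inf_commute measure_Int_set_pmf)
    also have "\<dots> = (\<Sum>f\<in>S \<inter> Fs. pmf ?Q f)" by (rule measure_measure_pmf_finite) (use \<open>finite Fs\<close> in auto)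
    also have "\<dots> = (\<Sum>f\<in>S \<inter> Fs. \<Prod>x\<in>A. pr x \<omega> (f x))"
      by (intro sum.cong refl) (auto simp: pmf_Pi[OF A] Fs_def PiE_dflt_def pr_def bernoulli_pmf.rep_eq)
    finally show ?thesis .
  qed
  have "(\<lambda>\<omega>. pr x \<omega> t) \<in> borel_measurable M" for t x
    using q[of x] by (cases t) (auto simp: pr_def)
  then show ?thesis unfolding eq by measurable
qed

lemma borel_measurable_cond_clust:
  assumes "\<And>l. (\<lambda>\<omega>. q l \<omega>) \<in> borel_measurable M"
  shows "(\<lambda>\<omega>. cond_clust n m (\<lambda>l. q l \<omega>) i j k) \<in> borel_measurable M"
proof -
  have "bip_law n m (\<lambda>l. q l \<omega>) = Pi_pmf ({1..n} \<times> {..<m}) False (\<lambda>x. bernoulli_pmf (q (fst x) \<omega>))" for \<omega>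
    unfolding bip_law_def by (simp add: split_def)
  then show ?thesis unfolding cond_clust_def
    by (simp only:) (intro borel_measurable_divide measurable_prob_Pi_bernoulli assms; simp)
qed

lemma conv_in_prob_AE:
  assumes M: "prob_space M" and X: "\<And>n. X n \<in> borel_measurable M" and L: "L \<in> borel_measurable M"
    and ae: "AE \<omega> in M. (\<lambda>n. X n \<omega>) \<longlonglongrightarrow> L \<omega>"
  shows "conv_in_prob M X L"
  unfolding conv_in_prob_def
proof (intro conjI allI impI X L)
  fix \<epsilon> :: real assume \<epsilon>: "\<epsilon> > 0"
  interpret prob_space M by (rule M)
  define S where "S n = {\<omega> \<in> space M. \<epsilon> < \<bar>X n \<omega> - L \<omega>\<bar>}" for n
  have S: "S n \<in> sets M" for n unfolding S_def using X[of n] L by measurable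
  have "(\<lambda>n. integral\<^sup>L M (indicator (S n) :: 'a \<Rightarrow> real)) \<longlonglongrightarrow> integral\<^sup>L M (\<lambda>_. 0 :: real)"
  proof (rule integral_dominated_convergence[where w="\<lambda>_. 1"])
    show "AE \<omega> in M. (\<lambda>n. indicator (S n) \<omega> :: real) \<longlonglongrightarrow> 0"
      using ae
    proof eventually_elim
      case (elim \<omega>)
      have "eventually (\<lambda>n. dist (X n \<omega>) (L \<omega>) < \<epsilon>) sequentially"
        using elim \<epsilon> by (rule tendstoD)
      then show ?case
        by (intro tendsto_eventually) (auto elim!: eventually_mono simp: S_def dist_real_def)
    qed
  qed (use S in \<open>auto simp: indicator_def\<close>)
  then show "(\<lambda>n. measure M {\<omega> \<in> space M. \<epsilon> < \<bar>X n \<omega> - L \<omega>\<bar>}) \<longlonglongrightarrow> 0"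
    using S by (simp add: S_def)
qed

lemma AE_pos_if_distr:
  assumes "X \<in> borel_measurable M" "distr M borel X = F" "prob_space F" "measure F {0<..} = 1"
  shows "AE \<omega> in M. X \<omega> > 0"
proof -
  interpret F: prob_space F by fact
  have "AE x in F. x \<in> {0<..}" by (rule F.AE_prob_1) (use assms(4) in simp)
  then have "AE x in distr M borel X. x > 0" unfolding assms(2) by simp
  then show ?thesis by (rule AE_distrD[OF assms(1)])
qed

theorem theorem1p3:
  fixes M :: "'a measure" and F :: "real measure" and W :: "nat \<Rightarrow> 'a \<Rightarrow> real"
    and \<alpha> \<beta> \<gamma> :: real and i j k :: nat
  assumes M: "prob_space M"
    and F: "prob_space F" "sets F = sets borel" "measure F {0<..} = 1"
    and F_mean: "integrable F (\<lambda>x. x)" "(\<integral>x. x \<partial>F) = 1"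
    and W_meas: "\<And>l. W l \<in> borel_measurable M"
    and W_distr: "\<And>l. distr M borel (W l) = F"
    and W_indep: "prob_space.indep_vars M (\<lambda>_. borel) W UNIV"
    and params: "\<alpha> > 0" "\<beta> > 0" "\<gamma> > 0"
    and ijk: "i \<ge> 1" "j \<ge> 1" "k \<ge> 1" "i \<noteq> j" "i \<noteq> k" "j \<noteq> k"
  defines "c \<equiv> \<lambda>n \<omega>. cond_clust n (num_groups \<alpha> \<beta> n)
                        (\<lambda>l. edge_prob \<alpha> \<gamma> n (W l \<omega>)) i j k"
  shows "(\<alpha> < 1 \<longrightarrow> conv_in_prob M c (\<lambda>_. 1))
       \<and> (\<alpha> = 1 \<longrightarrow> conv_in_prob M c (\<lambda>\<omega>. 1 / (1 + \<beta> * \<gamma> * W k \<omega>)))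
       \<and> (\<alpha> > 1 \<longrightarrow> conv_in_prob M c (\<lambda>_. 0))"
proof -
  have [measurable]: "W l \<in> borel_measurable M" for l by (rule W_meas)
  have c_meas: "c n \<in> borel_measurable M" for n
    unfolding c_def by (rule borel_measurable_cond_clust) (unfold edge_prob_def, measurable)
  have "AE \<omega> in M. (\<alpha> < 1 \<longrightarrow> (\<lambda>n. c n \<omega>) \<longlonglongrightarrow> 1)
       \<and> (\<alpha> = 1 \<longrightarrow> (\<lambda>n. c n \<omega>) \<longlonglongrightarrow> 1 / (1 + \<beta> * \<gamma> * W k \<omega>))
       \<and> (\<alpha> > 1 \<longrightarrow> (\<lambda>n. c n \<omega>) \<longlonglongrightarrow> 0)"
    using AE_pos_if_distr[OF W_meas W_distr F(1,3), of i] AE_pos_if_distr[OF W_meas W_distr F(1,3), of j]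
      AE_pos_if_distr[OF W_meas W_distr F(1,3), of k]
  proof eventually_elim
    case (elim \<omega>)
    interpret clustering_limit \<alpha> \<beta> \<gamma> "\<lambda>l. W l \<omega>" i j k
      by unfold_locales (use elim params ijk in auto)
    show ?case using clust_limits unfolding clust_def c_def .
  qed
  then show ?thesis
    by (intro conjI impI conv_in_prob_AE[OF M c_meas]) (auto elim!: eventually_mono)
qed

end
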